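(* Let $p$ and $q$ be positive integers with $q\ge 2$ and $\gcd(p,q)=1$, and let $\xi_j=e^{2\pi i j/q}$. Then $$\sum_{j=1}^{q-1}\frac{\xi_j}{(\xi_j-1)^2(\xi_j^p-1)}=\frac{q^2-1}{24}.$$ *)

theory Defs
  imports Complex_Main
begin

end

theory Submission
  imports Defs "HOL-Analysis.Analysis"
begin

text \<open>
  Put T(z) = z / ((z - 1)^2 (z^p - 1)). Pairing \<xi>_j with \<xi>_(q-j) = 1/\<xi>_j and using
  T(z) + T(1/z) = -z/(z - 1)^2 (coprimality makes \<xi>_j^p \<noteq> 1) shows that twice the sum
  equals -\<Sum>_j \<xi>_j/(\<xi>_j - 1)^2, which no longer involves p. For a q-th root of unity z \<noteq> 1,
  z/(z - 1)^2 = (1/2q) \<Sum>_(k<q) k(q - k) z^k; summing over j and using \<Sum>_j \<xi>_j^k = -1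
  for 0 < k < q gives -(1/2q) \<Sum>_(k<q) k(q - k) = -(q^2 - 1)/12.
\<close>

lemma weighted_geometric_sum:
  fixes z :: "'a::comm_ring_1"
  shows "(z - 1) * (\<Sum>k<n. of_nat k * z ^ k) = (of_nat n - 1) * z ^ n + 1 - (\<Sum>k<n. z ^ k)"
  by (induction n) (auto simp: algebra_simps)

lemma sum_complement_weighted_powers:
  fixes z :: "'a::comm_ring_1"
  shows "(z - 1)^2 * (\<Sum>k<n. of_nat k * (of_nat n - of_nat k) * z ^ k)
           = (of_nat n - 1) * z ^ Suc n - 2 * z ^ n + (of_nat n + 1) * z + 2 - 2 * (\<Sum>k<n. z ^ k)"
proof (induction n)
  case (Suc n)
  have "(\<Sum>k<Suc n. of_nat k * (of_nat (Suc n) - of_nat k) * z ^ k)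
        = (\<Sum>k<n. of_nat k * (of_nat n - of_nat k) * z ^ k) + (\<Sum>k<Suc n. of_nat k * z ^ k)"
    by (simp add: sum.distrib[symmetric] algebra_simps)
  then have "(z - 1)^2 * (\<Sum>k<Suc n. of_nat k * (of_nat (Suc n) - of_nat k) * z ^ k)
        = (z - 1)^2 * (\<Sum>k<n. of_nat k * (of_nat n - of_nat k) * z ^ k)
          + (z - 1) * ((z - 1) * (\<Sum>k<Suc n. of_nat k * z ^ k))"
    by (simp add: algebra_simps power2_eq_square)
  also have "\<dots> = (of_nat n - 1) * z ^ Suc n - 2 * z ^ n + (of_nat n + 1) * z + 2 - 2 * (\<Sum>k<n. z ^ k)
          + (z - 1) * (of_nat n * z ^ Suc n + 1 - (\<Sum>k<n. z ^ k) - z ^ n)"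
    unfolding Suc weighted_geometric_sum by (simp add: algebra_simps)
  also have "\<dots> = (of_nat (Suc n) - 1) * z ^ Suc (Suc n) - 2 * z ^ Suc n
          + (of_nat (Suc n) + 1) * z + 2 - 2 * (\<Sum>k<Suc n. z ^ k)"
  proof -
    have zn: "z ^ n = (z - 1) * (\<Sum>k<n. z ^ k) + 1"
      by (metis diff_add_cancel power_diff_1_eq)
    show ?thesis
      by (simp add: zn algebra_simps)
  qed
  finally show ?case .
qed simp

lemma root_of_unity_sum_powers_eq_0:
  fixes z :: "'a::idom"
  assumes "z ^ n = 1" and "z \<noteq> 1"
  shows "(\<Sum>k<n. z ^ k) = 0"
  using power_diff_1_eq[of z n] assms by simp

lemma root_of_unity_complement_weighted_sum:
  fixes z :: "'a::field"
  assumes "z ^ n = 1" and "z \<noteq> 1"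
  shows "(\<Sum>k<n. of_nat k * (of_nat n - of_nat k) * z ^ k) = 2 * of_nat n * z / (z - 1)^2"
proof -
  have "(z - 1)^2 * (\<Sum>k<n. of_nat k * (of_nat n - of_nat k) * z ^ k) = 2 * of_nat n * z"
    using sum_complement_weighted_powers[of z n] root_of_unity_sum_powers_eq_0[OF assms] assms(1)
    by (simp add: algebra_simps)
  then show ?thesis
    using assms(2) by (simp add: eq_divide_eq mult.commute)
qed

lemma sum_complement_weights:
  "6 * (\<Sum>k<n. of_nat k * (of_nat n - of_nat k)) = (of_nat n * (of_nat n ^ 2 - 1) :: 'a::comm_ring_1)"
proof (induction n)
  case (Suc n)
  have peel: "(\<Sum>k<Suc n. of_nat k * (of_nat (Suc n) - of_nat k))
        = (\<Sum>k<n. of_nat k * (of_nat n - of_nat k)) + (\<Sum>k<Suc n. of_nat k :: 'a)"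
    by (simp add: sum.distrib[symmetric] algebra_simps)
  have gauss: "2 * (\<Sum>k<Suc n. of_nat k :: 'a) = of_nat n * (of_nat n + 1)"
    by (induction n) (simp_all add: algebra_simps)
  have "6 * (\<Sum>k<Suc n. of_nat k * (of_nat (Suc n) - of_nat k))
        = 6 * (\<Sum>k<n. of_nat k * (of_nat n - of_nat k)) + 3 * (2 * (\<Sum>k<Suc n. of_nat k :: 'a))"
    unfolding peel by (simp only: distrib_left mult.assoc[symmetric]) simp
  also have "\<dots> = of_nat (Suc n) * (of_nat (Suc n) ^ 2 - 1)"
    unfolding Suc gauss by (simp add: algebra_simps power2_eq_square)
  finally show ?case .
qed simp

lemma inverse_pair_sum:
  fixes z :: "'a::field"
  assumes "z \<noteq> 0" and "z \<noteq> 1" and "z ^ p \<noteq> 1"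
  shows "z / ((z - 1)^2 * (z ^ p - 1)) + inverse z / ((inverse z - 1)^2 * (inverse z ^ p - 1))
           = - (z / (z - 1)^2)"
proof -
  define w where "w = z ^ p"
  have "w \<noteq> 0" "w \<noteq> 1"
    using assms by (auto simp: w_def)
  have "inverse z - 1 = (1 - z) / z" "inverse w - 1 = (1 - w) / w"
    using assms(1) \<open>w \<noteq> 0\<close> by (simp_all add: field_simps)
  then have "inverse z / ((inverse z - 1)^2 * (inverse w - 1)) = z * w / ((z - 1)^2 * (1 - w))"
    using assms \<open>w \<noteq> 0\<close> \<open>w \<noteq> 1\<close> by (simp add: power2_commute[of 1 z] field_simps power2_eq_square)
  also have "\<dots> = - (z * w / ((z - 1)^2 * (w - 1)))"
    by (metis minus_diff_eq divide_minus_right mult_minus_right)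
  finally have inverse_part: "inverse z / ((inverse z - 1)^2 * (inverse w - 1))
                              = - (z * w / ((z - 1)^2 * (w - 1)))" .
  have "z / ((z - 1)^2 * (w - 1)) - z * w / ((z - 1)^2 * (w - 1))
                 = - z * (w - 1) / ((z - 1)^2 * (w - 1))"
    by (simp add: diff_divide_distrib[symmetric] algebra_simps)
  with inverse_part show ?thesis
    using \<open>w \<noteq> 1\<close> by (simp add: w_def power_inverse)
qed

lemma sum_primitive_root_powers:
  fixes \<zeta> :: "'a::idom"
  assumes order: "\<And>k. \<zeta> ^ k = 1 \<longleftrightarrow> q dvd k" and "q > 0" and "\<not> q dvd k"
  shows "(\<Sum>j=1..q-1. (\<zeta> ^ j) ^ k) = -1"
proof -
  have "(\<zeta> ^ k) ^ q = 1" and "\<zeta> ^ k \<noteq> 1"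
    using order assms(3) by (simp_all flip: power_mult)
  then have "(\<Sum>j<q. (\<zeta> ^ k) ^ j) = 0"
    by (rule root_of_unity_sum_powers_eq_0)
  moreover have "{..<q} = insert 0 {1..q-1}"
    using \<open>q > 0\<close> by auto
  ultimately have "1 + (\<Sum>j=1..q-1. (\<zeta> ^ j) ^ k) = 0"
    by (simp add: mult.commute flip: power_mult)
  then show ?thesis
    by (simp add: eq_neg_iff_add_eq_0 add.commute)
qed

lemma sum_primitive_root_over_square:
  fixes \<zeta> :: "'a::field_char_0"
  assumes order: "\<And>k. \<zeta> ^ k = 1 \<longleftrightarrow> q dvd k" and "q > 0"
  shows "(\<Sum>j=1..q-1. \<zeta> ^ j / (\<zeta> ^ j - 1)^2) = - (of_nat q ^ 2 - 1) / 12"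
proof -
  define c :: "nat \<Rightarrow> 'a" where "c k = of_nat k * (of_nat q - of_nat k)" for k
  have nontrivial: "\<not> q dvd j" if "j \<in> {1..q-1}" for j
    using that by (auto dest: dvd_imp_le)
  have expand: "\<zeta> ^ j / (\<zeta> ^ j - 1)^2 = (\<Sum>k<q. c k * (\<zeta> ^ j) ^ k) / (2 * of_nat q)"
    if "j \<in> {1..q-1}" for j
    using root_of_unity_complement_weighted_sum[of "\<zeta> ^ j" q] order nontrivial[OF that] \<open>q > 0\<close>
    by (simp add: c_def mult.commute flip: power_mult)
  have "(\<Sum>j=1..q-1. \<zeta> ^ j / (\<zeta> ^ j - 1)^2) = (\<Sum>j=1..q-1. \<Sum>k<q. c k * (\<zeta> ^ j) ^ k) / (2 * of_nat q)"
    by (simp add: expand sum_divide_distrib)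
  also have "\<dots> = (\<Sum>k<q. c k * (\<Sum>j=1..q-1. (\<zeta> ^ j) ^ k)) / (2 * of_nat q)"
    by (simp only: sum_distrib_left sum.swap[of _ "{1..q-1}"])
  also have "(\<Sum>k<q. c k * (\<Sum>j=1..q-1. (\<zeta> ^ j) ^ k)) = - (\<Sum>k<q. c k)"
    unfolding sum_negf[symmetric]
  proof (rule sum.cong)
    fix k assume "k \<in> {..<q}"
    show "c k * (\<Sum>j=1..q-1. (\<zeta> ^ j) ^ k) = - c k"
    proof (cases "k = 0")
      case False
      with \<open>k \<in> {..<q}\<close> have "\<not> q dvd k"
        by (auto dest: dvd_imp_le)
      then show ?thesis
        using sum_primitive_root_powers[OF order \<open>q > 0\<close>] by simp
    qed (simp add: c_def)
  qed simp
  also have "(\<Sum>k<q. c k) = of_nat q * (of_nat q ^ 2 - 1) / 6"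
    using sum_complement_weights[of q] by (simp add: c_def eq_divide_eq mult.commute)
  also have "- (of_nat q * (of_nat q ^ 2 - 1) / 6) / (2 * of_nat q) = - (of_nat q ^ 2 - 1) / (12 :: 'a)"
    using \<open>q > 0\<close> by (simp add: field_simps)
  finally show ?thesis .
qed

lemma sum_primitive_root_twisted:
  fixes \<zeta> :: "'a::field_char_0"
  assumes order: "\<And>k. \<zeta> ^ k = 1 \<longleftrightarrow> q dvd k" and "q > 0" and "coprime p q"
  shows "(\<Sum>j=1..q-1. \<zeta> ^ j / ((\<zeta> ^ j - 1)^2 * ((\<zeta> ^ j) ^ p - 1))) = (of_nat q ^ 2 - 1) / 24"
proof -
  define T :: "'a \<Rightarrow> 'a" where "T z = z / ((z - 1)^2 * (z ^ p - 1))" for z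
  have "\<zeta> ^ q = 1"
    using order by simp
  then have "\<zeta> \<noteq> 0"
    using \<open>q > 0\<close> by (metis power_eq_0_iff zero_neq_one)
  have pair: "T (\<zeta> ^ j) + T (\<zeta> ^ (q - j)) = - (\<zeta> ^ j / (\<zeta> ^ j - 1)^2)" if "j \<in> {1..q-1}" for j
  proof -
    have "\<not> q dvd j"
      using that by (auto dest: dvd_imp_le)
    then have "\<not> q dvd j * p"
      using \<open>coprime p q\<close> by (metis coprime_commute coprime_dvd_mult_left_iff)
    then have "(\<zeta> ^ j) ^ p \<noteq> 1"
      using order by (simp flip: power_mult)
    have "j + (q - j) = q"
      using that by auto
    then have "\<zeta> ^ (q - j) = inverse (\<zeta> ^ j)"
      using \<open>\<zeta> ^ q = 1\<close> by (metis power_add inverse_unique)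
    then show ?thesis
      using inverse_pair_sum[of "\<zeta> ^ j" p] order \<open>\<not> q dvd j\<close> \<open>(\<zeta> ^ j) ^ p \<noteq> 1\<close> \<open>\<zeta> \<noteq> 0\<close>
      by (simp add: T_def)
  qed
  have "2 * (\<Sum>j=1..q-1. T (\<zeta> ^ j)) = (\<Sum>j=1..q-1. T (\<zeta> ^ j)) + (\<Sum>j=1..q-1. T (\<zeta> ^ (q - j)))"
    using sum.atLeastAtMost_rev[of "\<lambda>j. T (\<zeta> ^ j)" 1 "q - 1"] \<open>q > 0\<close> by simp
  also have "\<dots> = - (\<Sum>j=1..q-1. \<zeta> ^ j / (\<zeta> ^ j - 1)^2)"
    by (simp add: sum.distrib[symmetric] sum_negf[symmetric] pair)
  also have "\<dots> = (of_nat q ^ 2 - 1) / 12"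
    using sum_primitive_root_over_square[OF order \<open>q > 0\<close>] by simp
  finally show ?thesis
    by (simp add: T_def field_simps ac_simps)
qed

theorem mainTheorem8:
  fixes p q :: nat
  assumes "p > 0" and "q \<ge> 2" and "coprime p q"
  shows "(\<Sum>j=1..q-1. let \<xi> = exp (2 * pi * \<i> * of_nat j / of_nat q) in
            \<xi> / ((\<xi> - 1)^2 * (\<xi>^p - 1))) = (of_nat q ^ 2 - 1) / 24"
proof -
  define \<zeta> where "\<zeta> = exp (2 * of_real pi * \<i> / of_nat q)"
  have powers: "exp (2 * of_real pi * \<i> * of_nat j / of_nat q) = \<zeta> ^ j" for j
    unfolding \<zeta>_def by (simp add: exp_of_nat_mult[symmetric] mult.commute)
  have order: "\<zeta> ^ k = 1 \<longleftrightarrow> q dvd k" for k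
    using complex_root_unity_eq_1[of q k, unfolded powers] \<open>q \<ge> 2\<close> by simp
  show ?thesis
    using sum_primitive_root_twisted[OF order _ \<open>coprime p q\<close>] \<open>q \<ge> 2\<close>
    by (simp add: powers Let_def)
qed

end
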